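(* Let $\Phi\subset K$ be nested convex polygons in $\mathbb{R}^2$. For each side $s_i$ of $\Phi$, with outward normal $\nu_i$, let $v_i$ be any vertex of $K$ maximizing $\langle\cdot,\nu_i\rangle$ over $K$, and let $C_i=\operatorname{conv}(\{v_i\}\cup s_i)$ (a possibly degenerate triangle, called the cap based on $s_i$). Then the caps $C_i$ based on all sides of $\Phi$ have pairwise disjoint interiors. *)

theory Defs
  imports "HOL-Analysis.Analysis"
begin

definition convex_polygon :: "(real^2) set \<Rightarrow> bool" where
  "convex_polygon P \<longleftrightarrow> polytope P \<and> interior P \<noteq> {}"

definition side_of :: "(real^2) set \<Rightarrow> (real^2) set \<Rightarrow> bool" where
  "side_of s P \<longleftrightarrow> s face_of P \<and> aff_dim s = 1"

definition outward_normal :: "(real^2) set \<Rightarrow> (real^2) set \<Rightarrow> real^2 \<Rightarrow> bool" where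
  "outward_normal P s nu \<longleftrightarrow> norm nu = 1 \<and> (\<forall>x\<in>s. \<forall>y\<in>P. y \<bullet> nu \<le> x \<bullet> nu)"

definition cap :: "real^2 \<Rightarrow> (real^2) set \<Rightarrow> (real^2) set" where
  "cap v s = convex hull (insert v s)"

end

theory Submission
  imports Defs
begin

text \<open>Write a common interior point p of the caps based on the sides s and t as
  p = l v_s + (1 - l) x = m v_t + (1 - m) y with x \<in> s and y \<in> t. In the direction
  of the normal of s, the point p lies strictly beyond the supporting line of s, and
  v_s, being extreme in that direction, rises at least as high as v_t; this forces
  l \<le> m. Symmetrically m \<le> l, and with l = m the same comparison in the normal
  direction of t puts x on the line of t, hence x \<in> s \<inter> t. So the common interior
  lies in the convex hull of v_s and s \<inter> t, which is at most a point since distinct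
  sides meet at most in a vertex; that hull has dimension at most one, so the open
  common interior is empty.\<close>

lemma side_eq_Int_supporting_line:
  assumes "side_of s P" "outward_normal P s n" "convex P" "x \<in> s"
  shows "s = P \<inter> {y. y \<bullet> n = x \<bullet> n}"
proof -
  define L where "L = P \<inter> {y. n \<bullet> y = n \<bullet> x}"
  have s_face: "s face_of P" and s_dim: "aff_dim s = 1"
    using assms(1) by (auto simp: side_of_def)
  have "n \<noteq> 0"
    using assms(2) by (auto simp: outward_normal_def)
  have below: "n \<bullet> y \<le> n \<bullet> x" if "y \<in> P" for y
    using assms(2,4) that unfolding outward_normal_def by (metis inner_commute)
  have L_face: "L face_of P"
    unfolding L_def by (rule face_of_Int_supporting_hyperplane_le[OF assms(3) below])
  have "s \<subseteq> L"
  proof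
    fix z assume "z \<in> s"
    then have "z \<in> P"
      using face_of_imp_subset[OF s_face] by blast
    moreover have "n \<bullet> x \<le> n \<bullet> z"
      using assms(2,4) \<open>z \<in> s\<close> face_of_imp_subset[OF s_face]
      unfolding outward_normal_def by (metis inner_commute subsetD)
    ultimately show "z \<in> L"
      using below[of z] by (simp add: L_def)
  qed
  then have "s face_of L"
    using face_of_subset[OF s_face] L_def by blast
  moreover have "aff_dim L \<le> 1"
    using aff_dim_subset[of L "{y. n \<bullet> y = n \<bullet> x}"] \<open>n \<noteq> 0\<close> by (auto simp: L_def)
  ultimately have "s = L"
    using face_of_aff_dim_lt[OF face_of_imp_convex[OF L_face]] s_dim by fastforce
  then show ?thesis
    by (simp add: L_def inner_commute)
qed

lemma aff_dim_Int_distinct_sides: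
  assumes "side_of s P" "side_of t P" "s \<noteq> t"
  shows "aff_dim (s \<inter> t) < 1"
proof -
  have s_face: "s face_of P" and t_face: "t face_of P" and "aff_dim s = 1" "aff_dim t = 1"
    using assms(1,2) by (auto simp: side_of_def)
  have "\<not> s \<subseteq> t"
  proof
    assume "s \<subseteq> t"
    then have "s face_of t"
      using face_of_subset[OF s_face _ face_of_imp_subset[OF t_face]] by blast
    then show False
      using face_of_aff_dim_lt[OF face_of_imp_convex[OF t_face]] assms(3)
        \<open>aff_dim s = 1\<close> \<open>aff_dim t = 1\<close> by fastforce
  qed
  moreover have "(s \<inter> t) face_of s"
    using face_of_subset[OF face_of_Int[OF s_face t_face]] face_of_imp_subset[OF s_face] by blast
  ultimately show ?thesis
    using face_of_aff_dim_lt[OF face_of_imp_convex[OF s_face]] \<open>aff_dim s = 1\<close> by fastforce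
qed

lemma interior_convex_hull_insert_lowdim:
  fixes S :: "'a::euclidean_space set"
  assumes "aff_dim S + 1 < DIM('a)"
  shows "interior (convex hull (insert a S)) = {}"
proof (rule low_dim_interior)
  have "aff_dim (convex hull (insert a S)) \<le> aff_dim S + 1"
    by (simp add: aff_dim_convex_hull aff_dim_insert)
  then show "aff_dim (convex hull (insert a S)) \<noteq> int DIM('a)"
    using assms by linarith
qed

lemma cap_memE:
  assumes "p \<in> cap w s" "convex s" "s \<noteq> {}"
  obtains l x where "0 \<le> l" "l \<le> 1" "x \<in> s" "p = l *\<^sub>R w + (1 - l) *\<^sub>R x"
proof -
  have "convex hull s = s"
    using assms(2) by (rule convex_hull_eq[THEN iffD2])
  then obtain x u where "x \<in> s" "0 \<le> u" "u \<le> 1" "p = (1 - u) *\<^sub>R w + u *\<^sub>R x"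
    using assms(1,3) by (auto simp: cap_def convex_hull_insert_segments in_segment)
  then show ?thesis
    using that[of "1 - u" x] by simp
qed

lemma interior_cap_beyond_side:
  assumes "outward_normal P s n" "s \<subseteq> P" "\<forall>x\<in>s. x \<bullet> n \<le> w \<bullet> n"
    and "p \<in> interior (cap w s)" "x \<in> s"
  shows "x \<bullet> n < p \<bullet> n"
proof -
  have "n \<noteq> 0"
    using assms(1) by (auto simp: outward_normal_def)
  have "insert w s \<subseteq> {z. n \<bullet> x \<le> n \<bullet> z}"
    using assms(1-3,5) unfolding outward_normal_def by (auto simp: inner_commute[of n])
  then have "cap w s \<subseteq> {z. n \<bullet> x \<le> n \<bullet> z}"
    unfolding cap_def by (intro hull_minimal convex_halfspace_ge)
  then have "interior (cap w s) \<subseteq> {z. n \<bullet> x < n \<bullet> z}"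
    using interior_mono interior_halfspace_ge[OF \<open>n \<noteq> 0\<close>] by blast
  then show ?thesis
    using assms(4) by (auto simp: inner_commute)
qed

lemma cap_weight_le:
  fixes w w' x y p n :: "'a::real_inner"
  assumes "p = l *\<^sub>R w + (1 - l) *\<^sub>R x" "p = m *\<^sub>R w' + (1 - m) *\<^sub>R y" "0 \<le> m" "m \<le> 1"
    and "w' \<bullet> n \<le> w \<bullet> n" "y \<bullet> n \<le> x \<bullet> n" "x \<bullet> n < p \<bullet> n"
  shows "l \<le> m"
proof -
  have height: "p \<bullet> n - x \<bullet> n = l * (w \<bullet> n - x \<bullet> n)"
    unfolding assms(1) by (simp add: inner_add_left algebra_simps)
  have "p \<bullet> n = m * (w' \<bullet> n) + (1 - m) * (y \<bullet> n)"
    using assms(2) by (simp add: inner_add_left)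
  also have "\<dots> \<le> m * (w \<bullet> n) + (1 - m) * (x \<bullet> n)"
    using assms(3-6) by (intro add_mono mult_left_mono) auto
  finally have "l * (w \<bullet> n - x \<bullet> n) \<le> m * (w \<bullet> n - x \<bullet> n)"
    using height by (simp add: algebra_simps)
  moreover have "0 < m * (w \<bullet> n - x \<bullet> n)"
    using height assms(7) calculation by linarith
  then have "0 < w \<bullet> n - x \<bullet> n"
    using assms(3) by (simp add: zero_less_mult_iff)
  ultimately show ?thesis
    by simp
qed

lemma cap_weight_eq:
  fixes w w' x y p n :: "'a::real_inner"
  assumes "p = l *\<^sub>R w + (1 - l) *\<^sub>R x" "p = l *\<^sub>R w' + (1 - l) *\<^sub>R y" "0 \<le> l" "l \<le> 1"
    and "w \<bullet> n \<le> w' \<bullet> n" "x \<bullet> n \<le> y \<bullet> n"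
  shows "l = 1 \<or> x \<bullet> n = y \<bullet> n"
proof -
  have "p \<bullet> n = l * (w \<bullet> n) + (1 - l) * (x \<bullet> n)"
    unfolding assms(1) by (simp add: inner_add_left)
  moreover have "p \<bullet> n = l * (w' \<bullet> n) + (1 - l) * (y \<bullet> n)"
    unfolding assms(2) by (simp add: inner_add_left)
  ultimately have "l * (w' \<bullet> n - w \<bullet> n) + (1 - l) * (y \<bullet> n - x \<bullet> n) = 0"
    by (simp add: algebra_simps)
  moreover have "0 \<le> l * (w' \<bullet> n - w \<bullet> n)" "0 \<le> (1 - l) * (y \<bullet> n - x \<bullet> n)"
    using assms(3-6) by simp_all
  ultimately have "(1 - l) * (y \<bullet> n - x \<bullet> n) = 0"
    by linarith
  then show ?thesis
    by auto
qed

lemma interior_caps_Int_subset: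
  assumes P: "convex P" "P \<subseteq> K"
    and sides: "side_of s P" "side_of t P"
    and normals: "outward_normal P s n" "outward_normal P t n'"
    and apexes: "w \<in> K" "w' \<in> K" "\<forall>y\<in>K. y \<bullet> n \<le> w \<bullet> n" "\<forall>y\<in>K. y \<bullet> n' \<le> w' \<bullet> n'"
  shows "interior (cap w s) \<inter> interior (cap w' t) \<subseteq> convex hull (insert w (s \<inter> t))"
proof
  fix p assume p: "p \<in> interior (cap w s) \<inter> interior (cap w' t)"
  have s_face: "s face_of P" and t_face: "t face_of P" and "s \<noteq> {}" "t \<noteq> {}"
    using sides by (auto simp: side_of_def)
  have "s \<subseteq> P" "t \<subseteq> P"
    using s_face t_face by (auto dest: face_of_imp_subset)
  obtain l x where l: "0 \<le> l" "l \<le> 1" and "x \<in> s" and p_s: "p = l *\<^sub>R w + (1 - l) *\<^sub>R x"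
    using cap_memE p interior_subset face_of_imp_convex[OF s_face] \<open>s \<noteq> {}\<close> by blast
  obtain m y where m: "0 \<le> m" "m \<le> 1" and "y \<in> t" and p_t: "p = m *\<^sub>R w' + (1 - m) *\<^sub>R y"
    using cap_memE p interior_subset face_of_imp_convex[OF t_face] \<open>t \<noteq> {}\<close> by blast
  have "x \<in> P" "y \<in> P"
    using \<open>x \<in> s\<close> \<open>y \<in> t\<close> \<open>s \<subseteq> P\<close> \<open>t \<subseteq> P\<close> by auto
  have "x \<bullet> n < p \<bullet> n"
    using interior_cap_beyond_side[OF normals(1) \<open>s \<subseteq> P\<close> _ _ \<open>x \<in> s\<close>] p apexes(3) \<open>s \<subseteq> P\<close> P(2)
    by blast
  moreover have "y \<bullet> n \<le> x \<bullet> n" "x \<bullet> n' \<le> y \<bullet> n'"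
    using normals \<open>x \<in> s\<close> \<open>y \<in> t\<close> \<open>x \<in> P\<close> \<open>y \<in> P\<close> by (auto simp: outward_normal_def)
  moreover have "y \<bullet> n' < p \<bullet> n'"
    using interior_cap_beyond_side[OF normals(2) \<open>t \<subseteq> P\<close> _ _ \<open>y \<in> t\<close>] p apexes(4) \<open>t \<subseteq> P\<close> P(2)
    by blast
  moreover have "w' \<bullet> n \<le> w \<bullet> n" "w \<bullet> n' \<le> w' \<bullet> n'"
    using apexes by auto
  ultimately have "l = m"
    using cap_weight_le[OF p_s p_t m, of n] cap_weight_le[OF p_t p_s l, of n'] by linarith
  then have "l = 1 \<or> x \<bullet> n' = y \<bullet> n'"
    using cap_weight_eq[OF p_s _ l] p_t \<open>w \<bullet> n' \<le> w' \<bullet> n'\<close> \<open>x \<bullet> n' \<le> y \<bullet> n'\<close> by blast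
  then have "l = 1 \<or> x \<in> s \<inter> t"
    using side_eq_Int_supporting_line[OF sides(2) normals(2) P(1) \<open>y \<in> t\<close>] \<open>x \<in> P\<close> \<open>x \<in> s\<close>
    by blast
  then show "p \<in> convex hull (insert w (s \<inter> t))"
  proof
    assume "l = 1"
    then show ?thesis
      using p_s by (simp add: hull_inc)
  next
    assume "x \<in> s \<inter> t"
    then have "closed_segment w x \<subseteq> convex hull (insert w (s \<inter> t))"
      by (intro closed_segment_subset) (auto intro: hull_inc)
    moreover have "p \<in> closed_segment w x"
      using p_s l by (auto simp: in_segment intro!: exI[of _ "1 - l"])
    ultimately show ?thesis
      by blast
  qed
qed

theorem lemma7p1:
  fixes Phi K :: "(real^2) set"
    and nu v :: "(real^2) set \<Rightarrow> real^2"
  assumes "convex_polygon Phi" and "convex_polygon K" and "Phi \<subseteq> K"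
    and "\<And>s. side_of s Phi \<Longrightarrow> outward_normal Phi s (nu s)"
    and "\<And>s. side_of s Phi \<Longrightarrow> v s extreme_point_of K"
    and "\<And>s. side_of s Phi \<Longrightarrow> \<forall>y\<in>K. y \<bullet> nu s \<le> v s \<bullet> nu s"
  shows "\<forall>s t. side_of s Phi \<and> side_of t Phi \<and> s \<noteq> t \<longrightarrow>
           interior (cap (v s) s) \<inter> interior (cap (v t) t) = {}"
proof (intro allI impI)
  fix s t assume "side_of s Phi \<and> side_of t Phi \<and> s \<noteq> t"
  then have s: "side_of s Phi" and t: "side_of t Phi" and "s \<noteq> t"
    by auto
  have "convex Phi"
    using assms(1) by (simp add: convex_polygon_def polytope_imp_convex)
  have "v s \<in> K" "v t \<in> K"
    using assms(5) s t by (auto simp: extreme_point_of_def)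
  then have "interior (cap (v s) s) \<inter> interior (cap (v t) t) \<subseteq> convex hull (insert (v s) (s \<inter> t))"
    using interior_caps_Int_subset[OF \<open>convex Phi\<close> assms(3) s t] assms(4,6) s t by blast
  moreover have "interior (convex hull (insert (v s) (s \<inter> t))) = {}"
    using aff_dim_Int_distinct_sides[OF s t \<open>s \<noteq> t\<close>]
    by (intro interior_convex_hull_insert_lowdim) simp
  ultimately show "interior (cap (v s) s) \<inter> interior (cap (v t) t) = {}"
    using interior_maximal[OF _ open_Int[OF open_interior open_interior]] by blast
qed

end
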